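(* Let $\kappa$ be a regular uncountable cardinal and let $\langle T^\eta\mid\eta<\kappa\rangle$ be a sequence of streamlined $\kappa$-subtrees of a given streamlined $\kappa$-Souslin tree $T$. Then there are $\eta<\rho<\kappa$ such that $|T^\eta\cap T^\rho|=\kappa$.
   Context: $H_\kappa$ is the collection of sets of hereditary cardinality $<\kappa$. A streamlined tree is a set $T\subseteq{}^{<\kappa}H_\kappa$ closed under restrictions $t\mapsto t\restriction\beta$, ordered by proper initial segment; $T_\alpha=\{x\in T\mid\mathrm{dom}(x)=\alpha\}$. A streamlined $\kappa$-tree satisfies $0<|T_\alpha|<\kappa$ for all $\alpha<\kappa$; a streamlined $\kappa$-subtree of $T$ is a downward-closed subset of $T$ that is itself a streamlined $\kappa$-tree. A streamlined $\kappa$-Souslin tree is a streamlined $\kappa$-tree with no $f:\kappa\to H_\kappa$ such that $f\restriction\beta\in T$ for all $\beta<\kappa$, and with no antichain (set of pairwise $\subseteq$-incomparable nodes) of size $\kappa$. *)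

theory Defs
  imports Main "HOL-Library.Countable_Set"
begin

text \<open>The cardinal kappa is represented by a cardinal well-order r on a type 'k;
  ordinals below kappa are the elements of Field r, and the ordinal alpha
  is identified with its set of predecessors underS r alpha.
  Nodes x : alpha -> H_kappa are partial maps 'k to 'v with domain underS r alpha
  (values range over an arbitrary type 'v standing for H_kappa).\<close>

definition kappa_regular_uncountable :: "'k rel \<Rightarrow> bool" where
  "kappa_regular_uncountable r \<longleftrightarrow>
     Card_order r \<and> regularCard r \<and> \<not> countable (Field r)"

definition node_of_height :: "'k rel \<Rightarrow> 'k \<Rightarrow> ('k \<rightharpoonup> 'v) \<Rightarrow> bool" where
  "node_of_height r \<alpha> x \<longleftrightarrow> \<alpha> \<in> Field r \<and> dom x = underS r \<alpha>"

definition restr :: "'k rel \<Rightarrow> ('k \<rightharpoonup> 'v) \<Rightarrow> 'k \<Rightarrow> ('k \<rightharpoonup> 'v)" where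
  "restr r x \<beta> = x |` underS r \<beta>"

definition level :: "'k rel \<Rightarrow> ('k \<rightharpoonup> 'v) set \<Rightarrow> 'k \<Rightarrow> ('k \<rightharpoonup> 'v) set" where
  "level r T \<alpha> = {x \<in> T. dom x = underS r \<alpha>}"

definition streamlined_tree :: "'k rel \<Rightarrow> ('k \<rightharpoonup> 'v) set \<Rightarrow> bool" where
  "streamlined_tree r T \<longleftrightarrow>
     (\<forall>x \<in> T. \<exists>\<alpha>. node_of_height r \<alpha> x) \<and>
     (\<forall>x \<in> T. \<forall>\<alpha> \<beta>. node_of_height r \<alpha> x \<and> (\<beta>, \<alpha>) \<in> r \<longrightarrow> restr r x \<beta> \<in> T)"

definition streamlined_kappa_tree :: "'k rel \<Rightarrow> ('k \<rightharpoonup> 'v) set \<Rightarrow> bool" where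
  "streamlined_kappa_tree r T \<longleftrightarrow> streamlined_tree r T \<and>
     (\<forall>\<alpha> \<in> Field r. level r T \<alpha> \<noteq> {} \<and> (card_of (level r T \<alpha>), r) \<in> ordLess)"

definition streamlined_kappa_subtree :: "'k rel \<Rightarrow> ('k \<rightharpoonup> 'v) set \<Rightarrow> ('k \<rightharpoonup> 'v) set \<Rightarrow> bool" where
  "streamlined_kappa_subtree r S T \<longleftrightarrow> S \<subseteq> T \<and>
     (\<forall>y \<in> S. \<forall>x \<in> T. x \<subseteq>\<^sub>m y \<longrightarrow> x \<in> S) \<and>
     streamlined_kappa_tree r S"

definition antichain :: "('k \<rightharpoonup> 'v) set \<Rightarrow> bool" where
  "antichain A \<longleftrightarrow> (\<forall>x \<in> A. \<forall>y \<in> A. x \<noteq> y \<longrightarrow> \<not> x \<subseteq>\<^sub>m y \<and> \<not> y \<subseteq>\<^sub>m x)"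

definition streamlined_kappa_souslin_tree :: "'k rel \<Rightarrow> ('k \<rightharpoonup> 'v) set \<Rightarrow> bool" where
  "streamlined_kappa_souslin_tree r T \<longleftrightarrow> streamlined_kappa_tree r T \<and>
     \<not> (\<exists>f :: 'k \<Rightarrow> 'v. \<forall>\<beta> \<in> Field r. (\<lambda>\<gamma>. if \<gamma> \<in> underS r \<beta> then Some (f \<gamma>) else None) \<in> T) \<and>
     \<not> (\<exists>A \<subseteq> T. antichain A \<and> (card_of A, r) \<in> ordIso)"

end

theory Submission
  imports Defs
begin

(*
  Let S be a kappa-subtree of the Souslin tree T. The minimal nodes of T outside S form an
  antichain, so there are fewer than kappa of them and, kappa being regular, their heights are
  bounded by some a < kappa; hence the cone in T above any node of S of height a stays inside S.
  Since S has size kappa but is covered by its levels below a together with the cones above its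
  nodes of height a, one of these cones has size kappa. Choosing such a node x_eta in every T^eta,
  the kappa nodes x_eta cannot form an antichain, so x_eta is below x_rho for some eta <> rho, and
  the cone above x_rho lies in the intersection of T^eta and T^rho.
*)

unbundle cardinal_syntax

definition cone_above :: "('a \<rightharpoonup> 'b) set \<Rightarrow> ('a \<rightharpoonup> 'b) \<Rightarrow> ('a \<rightharpoonup> 'b) set" where
  "cone_above T x = {y \<in> T. x \<subseteq>\<^sub>m y}"

definition minimal_outside :: "('a \<rightharpoonup> 'b) set \<Rightarrow> ('a \<rightharpoonup> 'b) set \<Rightarrow> ('a \<rightharpoonup> 'b) set" where
  "minimal_outside T S = {z \<in> T. z \<notin> S \<and> (\<forall>w \<in> T. w \<subseteq>\<^sub>m z \<and> w \<noteq> z \<longrightarrow> w \<in> S)}"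

definition node_height :: "'k rel \<Rightarrow> ('k \<rightharpoonup> 'v) \<Rightarrow> 'k" where
  "node_height r x = (THE \<alpha>. node_of_height r \<alpha> x)"

lemma map_le_dom_eq: "f \<subseteq>\<^sub>m g \<Longrightarrow> dom f = dom g \<Longrightarrow> f = g"
  unfolding map_le_def by (rule ext) (metis domIff)

lemma restrict_map_le: "m |` A \<subseteq>\<^sub>m m"
  unfolding map_le_def by simp

lemma map_le_of_common_extension:
  assumes "f \<subseteq>\<^sub>m h" "g \<subseteq>\<^sub>m h" "dom f \<subseteq> dom g"
  shows "f \<subseteq>\<^sub>m g"
  using assms unfolding map_le_def by (metis subsetD)

lemma wo_rel_underS_inj:
  assumes "wo_rel r" "a \<in> Field r" "b \<in> Field r" "underS r a = underS r b"
  shows "a = b"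
proof -
  have "(a, b) \<in> r" "(b, a) \<in> r"
    using assms underS_incl_iff[OF wo_rel.LIN[OF assms(1)]] by auto
  then show ?thesis
    using antisymD[OF wo_rel.ANTISYM[OF assms(1)]] by blast
qed

lemma node_height_eq:
  assumes "wo_rel r" "node_of_height r \<alpha> x"
  shows "node_height r x = \<alpha>"
  unfolding node_height_def
  using assms wo_rel_underS_inj unfolding node_of_height_def by (intro the_equality) auto

lemma wf_proper_prefix_on_tree:
  assumes wo: "wo_rel r" and T: "streamlined_tree r T"
  shows "wf {(w, z). w \<in> T \<and> z \<in> T \<and> w \<subseteq>\<^sub>m z \<and> w \<noteq> z}"
proof (rule wf_subset)
  show "wf (inv_image (r - Id) (node_height r))"
    using wo_rel.WELL[OF wo] by (simp add: well_order_on_def Linear_order_wf_diff_Id)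
  show "{(w, z). w \<in> T \<and> z \<in> T \<and> w \<subseteq>\<^sub>m z \<and> w \<noteq> z} \<subseteq> inv_image (r - Id) (node_height r)"
  proof clarify
    fix w z assume "w \<in> T" "z \<in> T" "w \<subseteq>\<^sub>m z" "w \<noteq> z"
    then obtain \<alpha> \<beta> where \<alpha>: "node_of_height r \<alpha> w" and \<beta>: "node_of_height r \<beta> z"
      using T unfolding streamlined_tree_def by blast
    have "underS r \<alpha> \<subseteq> underS r \<beta>" "underS r \<alpha> \<noteq> underS r \<beta>"
      using \<alpha> \<beta> map_le_implies_dom_le[OF \<open>w \<subseteq>\<^sub>m z\<close>] map_le_dom_eq[OF \<open>w \<subseteq>\<^sub>m z\<close>] \<open>w \<noteq> z\<close>
      unfolding node_of_height_def by auto
    then have "(\<alpha>, \<beta>) \<in> r - Id"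
      using \<alpha> \<beta> underS_incl_iff[OF wo_rel.LIN[OF wo]] unfolding node_of_height_def by auto
    then show "(w, z) \<in> inv_image (r - Id) (node_height r)"
      using node_height_eq[OF wo \<alpha>] node_height_eq[OF wo \<beta>] by simp
  qed
qed

lemma minimal_outside_below:
  assumes "wo_rel r" "streamlined_tree r T" "y \<in> T" "y \<notin> S"
  shows "\<exists>z \<in> minimal_outside T S. z \<subseteq>\<^sub>m y"
proof -
  define D where "D = {w \<in> T. w \<subseteq>\<^sub>m y \<and> w \<notin> S}"
  have "y \<in> D"
    using assms(3,4) unfolding D_def by simp
  then obtain z where z: "z \<in> D"
    and min: "\<And>w. (w, z) \<in> {(w, z). w \<in> T \<and> z \<in> T \<and> w \<subseteq>\<^sub>m z \<and> w \<noteq> z} \<Longrightarrow> w \<notin> D"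
    by (rule wfE_min[OF wf_proper_prefix_on_tree[OF assms(1,2)]]) blast
  have "z \<in> minimal_outside T S"
  proof -
    have "w \<in> S" if "w \<in> T" "w \<subseteq>\<^sub>m z" "w \<noteq> z" for w
      using min[of w] that z map_le_trans unfolding D_def by blast
    then show ?thesis
      using z unfolding D_def minimal_outside_def by blast
  qed
  with z show ?thesis
    unfolding D_def by blast
qed

lemma antichain_minimal_outside: "antichain (minimal_outside T S)"
  unfolding antichain_def minimal_outside_def by blast

lemma regularCard_ordLess_bounded:
  assumes "wo_rel r" "regularCard r" "K \<subseteq> Field r" "|K| <o r"
  shows "\<exists>a \<in> Field r. \<forall>b \<in> K. (b, a) \<in> r"
proof -
  have "\<not> cofinal K r"
    using assms(2-4) not_ordLess_ordIso unfolding regularCard_def by blast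
  then obtain a where "a \<in> Field r" "\<forall>b \<in> K. \<not> (a \<noteq> b \<and> (a, b) \<in> r)"
    unfolding cofinal_def by blast
  then show ?thesis using assms(3) wo_rel.TOTALS[OF assms(1)] by (metis subsetD)
qed

lemma card_of_streamlined_kappa_tree:
  assumes cr: "Card_order r" and inf: "infinite (Field r)" and T: "streamlined_kappa_tree r T"
  shows "|T| =o r"
proof -
  have levels: "\<forall>\<alpha> \<in> Field r. level r T \<alpha> \<noteq> {} \<and> |level r T \<alpha>| <o r"
    using T unfolding streamlined_kappa_tree_def by blast
  have "|Field r| \<le>o r"
    using card_of_Field_ordIso[OF cr] ordIso_iff_ordLeq by blast
  moreover have "\<forall>\<alpha> \<in> Field r. |level r T \<alpha>| \<le>o r"
    using levels ordLess_imp_ordLeq by blast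
  ultimately have "|\<Union>\<alpha> \<in> Field r. level r T \<alpha>| \<le>o r"
    by (rule card_of_UNION_ordLeq_infinite_Field[OF inf cr])
  moreover have "T \<subseteq> (\<Union>\<alpha> \<in> Field r. level r T \<alpha>)"
  proof
    fix x assume "x \<in> T"
    then obtain \<alpha> where "node_of_height r \<alpha> x"
      using T unfolding streamlined_kappa_tree_def streamlined_tree_def by blast
    with \<open>x \<in> T\<close> show "x \<in> (\<Union>\<alpha> \<in> Field r. level r T \<alpha>)"
      unfolding level_def node_of_height_def by blast
  qed
  ultimately have "|T| \<le>o r"
    using card_of_mono1 ordLeq_transitive by blast
  moreover have "r \<le>o |T|"
  proof -
    have "\<forall>\<alpha> \<in> Field r. \<exists>x. x \<in> level r T \<alpha>"
      using levels by blast
    then obtain g where g: "\<forall>\<alpha> \<in> Field r. g \<alpha> \<in> level r T \<alpha>"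
      by (rule bchoice[elim_format]) blast
    then have "\<forall>\<alpha> \<in> Field r. dom (g \<alpha>) = underS r \<alpha>"
      unfolding level_def by blast
    then have "inj_on g (Field r)"
      using wo_rel_underS_inj[OF Card_order_wo_rel[OF cr]] by (intro inj_onI) (metis (no_types))
    moreover have "g ` Field r \<subseteq> T"
      using g unfolding level_def by blast
    ultimately have "|Field r| \<le>o |T|"
      using card_of_ordLeq by blast
    then show ?thesis
      using card_of_Field_ordIso[OF cr] ordIso_ordLeq_trans ordIso_symmetric by blast
  qed
  ultimately show ?thesis
    using ordIso_iff_ordLeq by blast
qed

lemma card_of_subset_streamlined_kappa_tree:
  assumes "Card_order r" "infinite (Field r)" "streamlined_kappa_tree r T" "X \<subseteq> T"
  shows "|X| \<le>o r"
  using ordLeq_ordIso_trans[OF card_of_mono1[OF assms(4)] card_of_streamlined_kappa_tree[OF assms(1-3)]] .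

lemma souslin_comparable_pair:
  assumes cr: "Card_order r" and sT: "streamlined_kappa_souslin_tree r T"
    and f: "f ` Field r \<subseteq> T"
  shows "\<exists>\<eta> \<in> Field r. \<exists>\<rho> \<in> Field r. \<eta> \<noteq> \<rho> \<and> f \<eta> \<subseteq>\<^sub>m f \<rho>"
proof (rule ccontr)
  assume incomparable: "\<not> ?thesis"
  then have "inj_on f (Field r)"
    by (metis inj_onI map_le_refl)
  then have "|f ` Field r| =o r"
    using card_of_ordIso inj_on_imp_bij_betw card_of_Field_ordIso[OF cr]
      ordIso_symmetric ordIso_transitive by blast
  moreover have "antichain (f ` Field r)"
    using incomparable unfolding antichain_def by auto
  ultimately show False
    using sT f unfolding streamlined_kappa_souslin_tree_def by blast
qed

lemma souslin_antichain_ordLess: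
  assumes cr: "Card_order r" and inf: "infinite (Field r)"
    and sT: "streamlined_kappa_souslin_tree r T" and A: "A \<subseteq> T" "antichain A"
  shows "|A| <o r"
proof -
  have "streamlined_kappa_tree r T"
    using sT unfolding streamlined_kappa_souslin_tree_def by blast
  then have "|A| \<le>o r"
    using card_of_subset_streamlined_kappa_tree[OF cr inf _ A(1)] by blast
  moreover have "\<not> |A| =o r"
    using sT A unfolding streamlined_kappa_souslin_tree_def by blast
  ultimately show ?thesis
    using ordLeq_iff_ordLess_or_ordIso by blast
qed

lemma minimal_outside_height_bounded:
  assumes cr: "Card_order r" and reg: "regularCard r" and inf: "infinite (Field r)"
    and sT: "streamlined_kappa_souslin_tree r T"
  shows "\<exists>a \<in> Field r. \<forall>z \<in> minimal_outside T S. (node_height r z, a) \<in> r"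
proof -
  have T: "streamlined_tree r T"
    using sT unfolding streamlined_kappa_souslin_tree_def streamlined_kappa_tree_def by blast
  have heights: "node_height r ` minimal_outside T S \<subseteq> Field r"
  proof
    fix \<alpha> assume "\<alpha> \<in> node_height r ` minimal_outside T S"
    then obtain z where z: "z \<in> T" "\<alpha> = node_height r z"
      unfolding minimal_outside_def by blast
    then obtain \<beta> where \<beta>: "node_of_height r \<beta> z"
      using T unfolding streamlined_tree_def by blast
    then show "\<alpha> \<in> Field r"
      using z(2) node_height_eq[OF Card_order_wo_rel[OF cr] \<beta>] unfolding node_of_height_def by simp
  qed
  have "minimal_outside T S \<subseteq> T"
    unfolding minimal_outside_def by blast
  then have "|minimal_outside T S| <o r"
    using souslin_antichain_ordLess[OF cr inf sT _ antichain_minimal_outside] by blast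
  then have "|node_height r ` minimal_outside T S| <o r"
    by (rule ordLeq_ordLess_trans[OF card_of_image])
  then obtain a where "a \<in> Field r" "\<forall>\<alpha> \<in> node_height r ` minimal_outside T S. (\<alpha>, a) \<in> r"
    using regularCard_ordLess_bounded[OF Card_order_wo_rel[OF cr] reg heights] by blast
  then show ?thesis
    by blast
qed

lemma cone_subset_subtree_above_minimal_outside:
  assumes wo: "wo_rel r" and T: "streamlined_tree r T" and S: "streamlined_kappa_subtree r S T"
    and a: "\<forall>z \<in> minimal_outside T S. (node_height r z, a) \<in> r"
    and x: "x \<in> level r S a"
  shows "cone_above T x \<subseteq> S"
proof
  fix y assume y: "y \<in> cone_above T x"
  show "y \<in> S"
  proof (rule ccontr)
    assume "y \<notin> S"
    then obtain z where z: "z \<in> minimal_outside T S" "z \<subseteq>\<^sub>m y"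
      using minimal_outside_below[OF wo T] y unfolding cone_above_def by blast
    then have zT: "z \<in> T" "z \<notin> S"
      unfolding minimal_outside_def by blast+
    then obtain \<gamma> where \<gamma>: "node_of_height r \<gamma> z"
      using T unfolding streamlined_tree_def by blast
    have "(\<gamma>, a) \<in> r"
      using a z(1) node_height_eq[OF wo \<gamma>] by auto
    then have "dom z \<subseteq> dom x"
      using \<gamma> x underS_incr[OF wo_rel.TRANS[OF wo] wo_rel.ANTISYM[OF wo]]
      unfolding node_of_height_def level_def by simp
    then have "z \<subseteq>\<^sub>m x"
      using map_le_of_common_extension[OF z(2)] y unfolding cone_above_def by blast
    moreover have "x \<in> S"
      using x unfolding level_def by blast
    ultimately have "z \<in> S"
      using S zT(1) unfolding streamlined_kappa_subtree_def by blast
    with zT(2) show False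
      by contradiction
  qed
qed

lemma streamlined_tree_subset_levels_below_Un_cones:
  assumes wo: "wo_rel r" and S: "streamlined_tree r S" and a: "a \<in> Field r"
  shows "S \<subseteq> (\<Union>\<gamma> \<in> underS r a. level r S \<gamma>) \<union> (\<Union>x \<in> level r S a. cone_above S x)"
proof
  fix y assume y: "y \<in> S"
  then obtain \<beta> where \<beta>: "node_of_height r \<beta> y"
    using S unfolding streamlined_tree_def by blast
  show "y \<in> (\<Union>\<gamma> \<in> underS r a. level r S \<gamma>) \<union> (\<Union>x \<in> level r S a. cone_above S x)"
  proof (cases "\<beta> \<in> underS r a")
    case True
    then show ?thesis
      using y \<beta> unfolding level_def node_of_height_def by blast
  next
    case False
    then have a\<beta>: "(a, \<beta>) \<in> r"
      using a \<beta> wo_rel.TOTALS[OF wo] unfolding underS_def node_of_height_def by blast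
    then have "restr r y a \<in> S"
      using S y \<beta> unfolding streamlined_tree_def by blast
    moreover have "dom (restr r y a) = underS r a"
      using \<beta> underS_incr[OF wo_rel.TRANS[OF wo] wo_rel.ANTISYM[OF wo] a\<beta>]
      unfolding node_of_height_def restr_def by auto
    moreover have "restr r y a \<subseteq>\<^sub>m y"
      unfolding restr_def by (rule restrict_map_le)
    ultimately show ?thesis
      using y unfolding cone_above_def level_def by blast
  qed
qed

lemma streamlined_kappa_tree_large_cone:
  assumes cr: "Card_order r" and reg: "regularCard r" and inf: "infinite (Field r)"
    and S: "streamlined_kappa_tree r S" and a: "a \<in> Field r"
  shows "\<exists>x \<in> level r S a. \<not> |cone_above S x| <o r"
proof (rule ccontr)
  assume "\<not> ?thesis"
  then have cones: "\<And>x. x \<in> level r S a \<Longrightarrow> |cone_above S x| <o r"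
    by blast
  have st: "stable r"
    using regularCard_stable[OF cr inf reg] .
  have levels: "\<And>\<gamma>. \<gamma> \<in> Field r \<Longrightarrow> |level r S \<gamma>| <o r"
    using S unfolding streamlined_kappa_tree_def by blast
  have "|level r S \<gamma>| <o r" if "\<gamma> \<in> underS r a" for \<gamma>
    by (rule levels[OF underS_Field[OF that]])
  then have "|\<Union>\<gamma> \<in> underS r a. level r S \<gamma>| <o r"
    by (rule stable_UNION[OF st card_of_underS[OF cr a]])
  moreover have "|\<Union>x \<in> level r S a. cone_above S x| <o r"
    by (rule stable_UNION[OF st levels[OF a] cones])
  ultimately have "|(\<Union>\<gamma> \<in> underS r a. level r S \<gamma>) \<union> (\<Union>x \<in> level r S a. cone_above S x)| <o r"
    by (rule card_of_Un_ordLess_infinite_Field[OF inf cr])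
  moreover have "S \<subseteq> (\<Union>\<gamma> \<in> underS r a. level r S \<gamma>) \<union> (\<Union>x \<in> level r S a. cone_above S x)"
    using streamlined_tree_subset_levels_below_Un_cones[OF Card_order_wo_rel[OF cr] _ a] S
    unfolding streamlined_kappa_tree_def by blast
  ultimately have "|S| <o r"
    using ordLeq_ordLess_trans[OF card_of_mono1] by blast
  then show False
    using card_of_streamlined_kappa_tree[OF cr inf S] not_ordLess_ordIso by blast
qed

lemma subtree_contains_large_cone:
  assumes cr: "Card_order r" and reg: "regularCard r" and inf: "infinite (Field r)"
    and sT: "streamlined_kappa_souslin_tree r T" and S: "streamlined_kappa_subtree r S T"
  shows "\<exists>x \<in> S. \<not> |cone_above T x| <o r \<and> cone_above T x \<subseteq> S"
proof -
  have T: "streamlined_tree r T"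
    using sT unfolding streamlined_kappa_souslin_tree_def streamlined_kappa_tree_def by blast
  obtain a where a: "a \<in> Field r" "\<forall>z \<in> minimal_outside T S. (node_height r z, a) \<in> r"
    using minimal_outside_height_bounded[OF cr reg inf sT] by blast
  have "streamlined_kappa_tree r S"
    using S unfolding streamlined_kappa_subtree_def by blast
  then obtain x where x: "x \<in> level r S a" "\<not> |cone_above S x| <o r"
    using streamlined_kappa_tree_large_cone[OF cr reg inf _ a(1)] by blast
  have "cone_above S x \<subseteq> cone_above T x"
    using S unfolding streamlined_kappa_subtree_def cone_above_def by blast
  then have "\<not> |cone_above T x| <o r"
    using x(2) ordLeq_ordLess_trans[OF card_of_mono1] by blast
  moreover have "cone_above T x \<subseteq> S"
    by (rule cone_subset_subtree_above_minimal_outside[OF Card_order_wo_rel[OF cr] T S a(2) x(1)])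
  ultimately show ?thesis
    using x(1) unfolding level_def by blast
qed

theorem proposition5p4:
  fixes r :: "'k rel" and T :: "('k \<rightharpoonup> 'v) set" and Ts :: "'k \<Rightarrow> ('k \<rightharpoonup> 'v) set"
  assumes "kappa_regular_uncountable r"
    and "streamlined_kappa_souslin_tree r T"
    and "\<forall>\<eta> \<in> Field r. streamlined_kappa_subtree r (Ts \<eta>) T"
  shows "\<exists>\<eta> \<in> Field r. \<exists>\<rho> \<in> Field r. (\<eta>, \<rho>) \<in> r \<and> \<eta> \<noteq> \<rho> \<and>
           (card_of (Ts \<eta> \<inter> Ts \<rho>), r) \<in> ordIso"
proof -
  have cr: "Card_order r" and reg: "regularCard r" and inf: "infinite (Field r)"
    using assms(1) countable_finite unfolding kappa_regular_uncountable_def by blast+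
  have kT: "streamlined_kappa_tree r T"
    using assms(2) unfolding streamlined_kappa_souslin_tree_def by blast
  have "\<forall>\<eta> \<in> Field r. \<exists>x. x \<in> Ts \<eta> \<and> \<not> |cone_above T x| <o r \<and> cone_above T x \<subseteq> Ts \<eta>"
    using subtree_contains_large_cone[OF cr reg inf assms(2)] assms(3) by blast
  then obtain x where x: "\<forall>\<eta> \<in> Field r. x \<eta> \<in> Ts \<eta> \<and> \<not> |cone_above T (x \<eta>)| <o r \<and> cone_above T (x \<eta>) \<subseteq> Ts \<eta>"
    by (rule bchoice[elim_format]) blast
  then have "x ` Field r \<subseteq> T"
    using assms(3) unfolding streamlined_kappa_subtree_def by blast
  then obtain \<eta> \<rho> where \<eta>\<rho>: "\<eta> \<in> Field r" "\<rho> \<in> Field r" "\<eta> \<noteq> \<rho>" "x \<eta> \<subseteq>\<^sub>m x \<rho>"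
    using souslin_comparable_pair[OF cr assms(2)] by blast
  have "Ts \<eta> \<inter> Ts \<rho> \<subseteq> T"
    using assms(3) \<eta>\<rho>(1) unfolding streamlined_kappa_subtree_def by blast
  then have "|Ts \<eta> \<inter> Ts \<rho>| \<le>o r"
    by (rule card_of_subset_streamlined_kappa_tree[OF cr inf kT])
  moreover have "cone_above T (x \<rho>) \<subseteq> Ts \<eta> \<inter> Ts \<rho>"
    using x \<eta>\<rho> map_le_trans unfolding cone_above_def by blast
  then have "\<not> |Ts \<eta> \<inter> Ts \<rho>| <o r"
    using x \<eta>\<rho>(2) ordLeq_ordLess_trans[OF card_of_mono1] by blast
  ultimately have "|Ts \<eta> \<inter> Ts \<rho>| =o r"
    using ordLeq_iff_ordLess_or_ordIso by blast
  then have iso: "|Ts \<eta> \<inter> Ts \<rho>| =o r" "|Ts \<rho> \<inter> Ts \<eta>| =o r"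
    by (simp_all add: Int_commute)
  have "(\<eta>, \<rho>) \<in> r \<or> (\<rho>, \<eta>) \<in> r"
    using \<eta>\<rho>(1,2) wo_rel.TOTALS[OF Card_order_wo_rel[OF cr]] by blast
  then show ?thesis
    using \<eta>\<rho>(1-3) iso by blast
qed

end
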